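(* Let $X,Y$ be uniform spaces and $f\colon X\to Y$ a function generating the uniform structure on $Y$. Then $f$ is a uniform covering map if and only if (a) $f$ has the chain lifting property and (b) $f$ has the uniqueness of chain lifts property.
   Context: Notation: entourages are symmetric and contain the diagonal; $B(x,E)=\{y:(x,y)\in E\}$; $f(E)=\{(f(x),f(y)):(x,y)\in E\}$. A surjection $f\colon X\to Y$ generates the uniform structure on $Y$ if $\{f(E)\}$ ($E$ entourage of $X$) is a base of the uniform structure of $Y$. The Rips complex $R(X,E)$ is the simplicial complex with vertex set $X$ whose simplices are finite $F\subset X$ with $F\times F\subset E$; $f_E\colon R(X,E)\to R(Y,f(E))$ is the induced simplicial map. $f$ is a uniform covering map if it generates the uniform structure on $Y$ and the entourages $E$ of $X$ for which $f_E$ is a topological covering map form a base of $X$. An $E$-chain is a sequence $x_0,\dots,x_n$ with $(x_i,x_{i+1})\in E$. $f$ has the chain lifting property if for every entourage $E$ of $X$ there is an entourage $F$ of $X$ such that every $f(F)$-chain in $Y$ starting at $f(x_0)$ lifts (via $f$) to an $E$-chain in $X$ starting at $x_0$, for every $x_0\in X$. $f$ has the uniqueness of chain lifts property if for every entourage $E$ there is an entourage $F$ such that any two $F$-chains with common origin and identical images under $f$ are equal. *)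

theory Defs
  imports "HOL-Analysis.Analysis"
begin

definition entourage :: "('a::uniform_space \<times> 'a) set \<Rightarrow> bool" where
  "entourage E \<longleftrightarrow> sym E \<and> Id \<subseteq> E \<and> eventually (\<lambda>p. p \<in> E) uniformity"

definition pimage :: "('a \<Rightarrow> 'b) \<Rightarrow> ('a \<times> 'a) set \<Rightarrow> ('b \<times> 'b) set" where
  "pimage f E = (\<lambda>(x, y). (f x, f y)) ` E"

definition generates_uniformity :: "('a::uniform_space \<Rightarrow> 'b::uniform_space) \<Rightarrow> bool" where
  "generates_uniformity f \<longleftrightarrow> surj f \<and>
     (\<forall>E. entourage E \<longrightarrow> entourage (pimage f E)) \<and>
     (\<forall>D. entourage D \<longrightarrow> (\<exists>E. entourage E \<and> pimage f E \<subseteq> D))"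

definition rips_simplices :: "('a \<times> 'a) set \<Rightarrow> 'a set set" where
  "rips_simplices E = {F. finite F \<and> F \<noteq> {} \<and> F \<times> F \<subseteq> E}"

text \<open>Closed geometric simplex spanned by a finite vertex set, as barycentric coordinate functions.\<close>
definition closed_simplex :: "'a set \<Rightarrow> ('a \<Rightarrow> real) set" where
  "closed_simplex \<sigma> = {\<alpha>. (\<forall>v. 0 \<le> \<alpha> v) \<and> (\<forall>v. v \<notin> \<sigma> \<longrightarrow> \<alpha> v = 0) \<and> sum \<alpha> \<sigma> = 1}"

definition realization_carrier :: "'a set set \<Rightarrow> ('a \<Rightarrow> real) set" where
  "realization_carrier K = (\<Union>\<sigma>\<in>K. closed_simplex \<sigma>)"

text \<open>Geometric realization with the weak (Whitehead) topology: a set is open iff its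
  trace on every closed simplex is open in the Euclidean topology of that simplex.\<close>
definition realization :: "'a set set \<Rightarrow> ('a \<Rightarrow> real) topology" where
  "realization K = topology (\<lambda>U. U \<subseteq> realization_carrier K \<and>
     (\<forall>\<sigma>\<in>K. openin (subtopology (powertop_real UNIV) (closed_simplex \<sigma>)) (U \<inter> closed_simplex \<sigma>)))"

definition rips :: "('a \<times> 'a) set \<Rightarrow> ('a \<Rightarrow> real) topology" where
  "rips E = realization (rips_simplices E)"

text \<open>Affine extension of a vertex map to the realizations.\<close>
definition push :: "('a \<Rightarrow> 'b) \<Rightarrow> ('a \<Rightarrow> real) \<Rightarrow> ('b \<Rightarrow> real)" where
  "push f \<alpha> = (\<lambda>w. \<Sum>v\<in>{v. f v = w \<and> \<alpha> v \<noteq> 0}. \<alpha> v)"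

definition covering_map :: "'a topology \<Rightarrow> 'b topology \<Rightarrow> ('a \<Rightarrow> 'b) \<Rightarrow> bool" where
  "covering_map C B p \<longleftrightarrow>
     continuous_map C B p \<and> p ` topspace C = topspace B \<and>
     (\<forall>b\<in>topspace B. \<exists>T. b \<in> T \<and> openin B T \<and>
        (\<exists>V. \<Union>V = {x \<in> topspace C. p x \<in> T} \<and>
             (\<forall>u\<in>V. openin C u) \<and> pairwise disjnt V \<and>
             (\<forall>u\<in>V. homeomorphic_map (subtopology C u) (subtopology B T) p)))"

definition uniform_covering_map :: "('a::uniform_space \<Rightarrow> 'b::uniform_space) \<Rightarrow> bool" where
  "uniform_covering_map f \<longleftrightarrow> generates_uniformity f \<and>
     (\<forall>D. entourage D \<longrightarrow>
        (\<exists>E. entourage E \<and> E \<subseteq> D \<and> covering_map (rips E) (rips (pimage f E)) (push f)))"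

definition is_chain :: "('a \<times> 'a) set \<Rightarrow> (nat \<Rightarrow> 'a) \<Rightarrow> nat \<Rightarrow> bool" where
  "is_chain E c n \<longleftrightarrow> (\<forall>i<n. (c i, c (Suc i)) \<in> E)"

definition chain_lifting :: "('a::uniform_space \<Rightarrow> 'b) \<Rightarrow> bool" where
  "chain_lifting f \<longleftrightarrow>
     (\<forall>E. entourage E \<longrightarrow> (\<exists>F. entourage F \<and>
        (\<forall>x0 (d :: nat \<Rightarrow> 'b) n. is_chain (pimage f F) d n \<and> d 0 = f x0 \<longrightarrow>
           (\<exists>c. is_chain E c n \<and> c 0 = x0 \<and> (\<forall>i\<le>n. f (c i) = d i)))))"

definition unique_chain_lifts :: "('a::uniform_space \<Rightarrow> 'b) \<Rightarrow> bool" where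
  "unique_chain_lifts f \<longleftrightarrow>
     (\<forall>E :: ('a \<times> 'a) set. entourage E \<longrightarrow> (\<exists>F. entourage F \<and>
        (\<forall>c d n. is_chain F c n \<and> is_chain F d n \<and> c 0 = d 0 \<and> (\<forall>i\<le>n. f (c i) = f (d i))
            \<longrightarrow> (\<forall>i\<le>n. c i = d i))))"

end

theory Submission
  imports Defs
begin

(* The topology of the Rips complexes enters only locally: an open set containing a
   vertex contains an initial segment of every edge at that vertex, a covering map is
   injective and open on a sheet, and the open star of a vertex (barycentric coordinate
   at that vertex positive) is open.  Everything else is combinatorics of barycentric
   coordinates and of the one-step properties of a vertex map f with respect to E:
   injectivity of f on the balls B(x,E), lifting of edges, and lifting of simplices.

   Forward direction: if push f : R(X,E) -> R(Y,f(E)) is a covering map, two edges at x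
   with equal images start in one sheet, so f is injective on B(x,E); and the image of the
   star of x under the sheet is open, so edges at f x lift to edges at x.  Edge by edge
   these give existence and uniqueness of lifts of chains.

   Backward direction: if f is injective on the balls of E and simplices lift, push f maps
   the star of each vertex homeomorphically onto the star of its image, and the stars over
   a fibre are disjoint, so push f is a covering map.  Uniqueness of lifts of 1-chains and
   existence of lifts of 2-chains produce, below any entourage, an entourage E with these
   two properties. *)

section \<open>The geometric realization\<close>

text \<open>The weak topology is a topology: traces on the closed simplices are preserved by
  finite intersections and arbitrary unions.\<close>
lemma istopology_realization:
  "istopology (\<lambda>U. U \<subseteq> realization_carrier K \<and>
     (\<forall>\<sigma>\<in>K. openin (subtopology (powertop_real UNIV) (closed_simplex \<sigma>)) (U \<inter> closed_simplex \<sigma>)))"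
  unfolding istopology_def
proof (rule conjI; intro allI impI)
  fix S T assume S: "S \<subseteq> realization_carrier K \<and>
     (\<forall>\<sigma>\<in>K. openin (subtopology (powertop_real UNIV) (closed_simplex \<sigma>)) (S \<inter> closed_simplex \<sigma>))"
    and T: "T \<subseteq> realization_carrier K \<and>
     (\<forall>\<sigma>\<in>K. openin (subtopology (powertop_real UNIV) (closed_simplex \<sigma>)) (T \<inter> closed_simplex \<sigma>))"
  show "S \<inter> T \<subseteq> realization_carrier K \<and>
     (\<forall>\<sigma>\<in>K. openin (subtopology (powertop_real UNIV) (closed_simplex \<sigma>)) (S \<inter> T \<inter> closed_simplex \<sigma>))"
  proof (rule conjI[OF _ ballI])
    show "S \<inter> T \<subseteq> realization_carrier K" using S by blast
    fix \<sigma> assume "\<sigma> \<in> K"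
    then have "openin (subtopology (powertop_real UNIV) (closed_simplex \<sigma>))
        ((S \<inter> closed_simplex \<sigma>) \<inter> (T \<inter> closed_simplex \<sigma>))"
      using S T by (intro openin_Int[of _ "S \<inter> closed_simplex \<sigma>" "T \<inter> closed_simplex \<sigma>"]) auto
    moreover have "(S \<inter> closed_simplex \<sigma>) \<inter> (T \<inter> closed_simplex \<sigma>) = S \<inter> T \<inter> closed_simplex \<sigma>" by blast
    ultimately show "openin (subtopology (powertop_real UNIV) (closed_simplex \<sigma>)) (S \<inter> T \<inter> closed_simplex \<sigma>)"
      by simp
  qed
next
  fix \<U> assume U: "\<forall>U\<in>\<U>. U \<subseteq> realization_carrier K \<and>
     (\<forall>\<sigma>\<in>K. openin (subtopology (powertop_real UNIV) (closed_simplex \<sigma>)) (U \<inter> closed_simplex \<sigma>))"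
  show "\<Union>\<U> \<subseteq> realization_carrier K \<and>
     (\<forall>\<sigma>\<in>K. openin (subtopology (powertop_real UNIV) (closed_simplex \<sigma>)) (\<Union>\<U> \<inter> closed_simplex \<sigma>))"
  proof (rule conjI[OF _ ballI])
    show "\<Union>\<U> \<subseteq> realization_carrier K" using U by blast
    fix \<sigma> assume "\<sigma> \<in> K"
    then have "openin (subtopology (powertop_real UNIV) (closed_simplex \<sigma>)) (\<Union>U\<in>\<U>. U \<inter> closed_simplex \<sigma>)"
      using U by (intro openin_Union) auto
    moreover have "(\<Union>U\<in>\<U>. U \<inter> closed_simplex \<sigma>) = \<Union>\<U> \<inter> closed_simplex \<sigma>" by blast
    ultimately show "openin (subtopology (powertop_real UNIV) (closed_simplex \<sigma>)) (\<Union>\<U> \<inter> closed_simplex \<sigma>)"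
      by simp
  qed
qed

lemma openin_realization:
  "openin (realization K) U \<longleftrightarrow> U \<subseteq> realization_carrier K \<and>
     (\<forall>\<sigma>\<in>K. openin (subtopology (powertop_real UNIV) (closed_simplex \<sigma>)) (U \<inter> closed_simplex \<sigma>))"
  unfolding realization_def using istopology_realization[of K] by simp

lemma topspace_realization: "topspace (realization K) = realization_carrier K"
proof -
  have "realization_carrier K \<inter> closed_simplex \<sigma> =
      topspace (subtopology (powertop_real UNIV) (closed_simplex \<sigma>))" if "\<sigma> \<in> K" for \<sigma>
    using that by (auto simp: realization_carrier_def)
  then have "openin (realization K) (realization_carrier K)"
    unfolding openin_realization by (simp del: topspace_subtopology)
  then have "realization_carrier K \<subseteq> topspace (realization K)"
    by (rule openin_subset)
  moreover have "topspace (realization K) \<subseteq> realization_carrier K"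
    using openin_realization[of K "topspace (realization K)"] by simp
  ultimately show ?thesis by blast
qed

lemma topspace_rips: "topspace (rips E) = realization_carrier (rips_simplices E)"
  unfolding rips_def by (rule topspace_realization)

lemma openin_rips:
  "openin (rips E) U \<longleftrightarrow> U \<subseteq> realization_carrier (rips_simplices E) \<and>
     (\<forall>\<sigma>\<in>rips_simplices E. openin (subtopology (powertop_real UNIV) (closed_simplex \<sigma>)) (U \<inter> closed_simplex \<sigma>))"
  unfolding rips_def by (rule openin_realization)

lemma in_realization_carrier: "\<alpha> \<in> realization_carrier K \<longleftrightarrow> (\<exists>\<sigma>\<in>K. \<alpha> \<in> closed_simplex \<sigma>)"
  unfolding realization_carrier_def by auto

lemma closed_simplex_support: "\<alpha> \<in> closed_simplex \<sigma> \<Longrightarrow> \<alpha> v \<noteq> 0 \<Longrightarrow> v \<in> \<sigma>"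
  unfolding closed_simplex_def by auto

lemma closed_simplex_nonneg: "\<alpha> \<in> closed_simplex \<sigma> \<Longrightarrow> 0 \<le> \<alpha> v"
  unfolding closed_simplex_def by auto

lemma closed_simplex_sum: "\<alpha> \<in> closed_simplex \<sigma> \<Longrightarrow> sum \<alpha> \<sigma> = 1"
  unfolding closed_simplex_def by auto

lemma closed_simplex_positive_vertex:
  assumes "\<alpha> \<in> closed_simplex \<sigma>"
  obtains v where "v \<in> \<sigma>" "0 < \<alpha> v"
proof -
  have "\<not> (\<forall>v\<in>\<sigma>. \<alpha> v \<le> 0)"
    using sum_nonpos[of \<sigma> \<alpha>] closed_simplex_sum[OF assms] by auto
  then show thesis using that by (auto simp: not_le)
qed

lemma rips_simplex_finite: "\<sigma> \<in> rips_simplices E \<Longrightarrow> finite \<sigma>"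
  unfolding rips_simplices_def by auto

lemma rips_edge: "\<sigma> \<in> rips_simplices E \<Longrightarrow> a \<in> \<sigma> \<Longrightarrow> b \<in> \<sigma> \<Longrightarrow> (a, b) \<in> E"
  unfolding rips_simplices_def by auto

definition open_star :: "('a \<times> 'a) set \<Rightarrow> 'a \<Rightarrow> ('a \<Rightarrow> real) set" where
  "open_star E x = {\<alpha> \<in> realization_carrier (rips_simplices E). 0 < \<alpha> x}"

lemma open_star_simplex:
  assumes "\<alpha> \<in> open_star E x"
  obtains \<sigma> where "\<sigma> \<in> rips_simplices E" "\<alpha> \<in> closed_simplex \<sigma>" "x \<in> \<sigma>"
proof -
  from assms obtain \<sigma> where "\<sigma> \<in> rips_simplices E" "\<alpha> \<in> closed_simplex \<sigma>" "0 < \<alpha> x"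
    unfolding open_star_def in_realization_carrier by blast
  then show thesis using that closed_simplex_support[of \<alpha> \<sigma> x] by simp
qed

lemma openin_open_star: "openin (rips E) (open_star E x)"
  unfolding openin_rips
proof (intro conjI ballI)
  fix \<sigma> assume \<sigma>: "\<sigma> \<in> rips_simplices E"
  let ?S = "subtopology (powertop_real UNIV) (closed_simplex \<sigma>)"
  have "continuous_map ?S euclideanreal (\<lambda>\<alpha>. \<alpha> x)"
    by (intro continuous_map_from_subtopology continuous_map_product_projection) auto
  then have "openin ?S {\<alpha> \<in> topspace ?S. \<alpha> x \<in> {0<..}}"
    by (rule openin_continuous_map_preimage) auto
  moreover have "{\<alpha> \<in> topspace ?S. \<alpha> x \<in> {0<..}} = open_star E x \<inter> closed_simplex \<sigma>"
    using \<sigma> by (auto simp: open_star_def in_realization_carrier)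
  ultimately show "openin ?S (open_star E x \<inter> closed_simplex \<sigma>)" by simp
qed (auto simp: open_star_def)

definition edge_point :: "'a \<Rightarrow> 'a \<Rightarrow> real \<Rightarrow> 'a \<Rightarrow> real" where
  "edge_point x a t = (\<lambda>v. (if v = x then 1 - t else 0) + (if v = a then t else 0))"

lemma edge_point_closed_simplex: "0 \<le> t \<Longrightarrow> t \<le> 1 \<Longrightarrow> edge_point x a t \<in> closed_simplex {x, a}"
  unfolding closed_simplex_def edge_point_def by (cases "x = a") auto

lemma edge_point_start: "edge_point x a 0 = edge_point x b 0"
  unfolding edge_point_def by auto

text \<open>The vertex x, the common start of all edges at x, is a point of R(X,E).\<close>
lemma edge_point_in_rips:
  assumes "(x, x) \<in> E"
  shows "edge_point x a 0 \<in> topspace (rips E)"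
proof -
  have "{x} \<in> rips_simplices E" using assms unfolding rips_simplices_def by auto
  moreover have "edge_point x a 0 \<in> closed_simplex {x}"
    unfolding closed_simplex_def edge_point_def by auto
  ultimately show ?thesis unfolding topspace_rips in_realization_carrier by blast
qed

lemma open_contains_initial_edge:
  assumes U: "openin (rips E) U" and edge: "{x, a} \<times> {x, a} \<subseteq> E" and x: "edge_point x a 0 \<in> U"
  shows "\<exists>\<epsilon>>0. \<forall>t. 0 < t \<longrightarrow> t < \<epsilon> \<longrightarrow> edge_point x a t \<in> U"
proof -
  have "{x, a} \<in> rips_simplices E" using edge unfolding rips_simplices_def by auto
  then have "openin (subtopology (powertop_real UNIV) (closed_simplex {x, a})) (U \<inter> closed_simplex {x, a})"
    using U unfolding openin_rips by blast
  then obtain W where W: "openin (powertop_real UNIV) W" "U \<inter> closed_simplex {x, a} = W \<inter> closed_simplex {x, a}"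
    unfolding openin_subtopology by blast
  have "continuous_map euclideanreal euclideanreal (\<lambda>t. edge_point x a t v)" for v
    by (cases "v = x"; cases "v = a") (auto simp: edge_point_def intro!: continuous_intros)
  then have "continuous_map euclideanreal (powertop_real UNIV) (edge_point x a)"
    unfolding continuous_map_componentwise_UNIV by blast
  then have "openin euclideanreal {t \<in> topspace euclideanreal. edge_point x a t \<in> W}"
    using W(1) by (rule openin_continuous_map_preimage)
  then have "open {t. edge_point x a t \<in> W}" by simp
  moreover have "0 \<in> {t. edge_point x a t \<in> W}" using x W(2) edge_point_closed_simplex[of 0 x a] by auto
  ultimately obtain e where e: "e > 0" "\<And>t. dist t 0 < e \<Longrightarrow> edge_point x a t \<in> W"
    unfolding open_dist by blast
  have "edge_point x a t \<in> U" if "0 < t" "t < min e 1" for t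
    using e(2)[of t] W(2) edge_point_closed_simplex[of t x a] that by (auto simp: dist_real_def)
  then show ?thesis using e(1) by (intro exI[of _ "min e 1"]) auto
qed

section \<open>The simplicial map induced by a vertex map\<close>

lemma push_closed_simplex_eq:
  assumes "finite \<sigma>" "\<alpha> \<in> closed_simplex \<sigma>"
  shows "push f \<alpha> w = sum \<alpha> {v \<in> \<sigma>. f v = w}"
  unfolding push_def
  by (rule sum.mono_neutral_left) (use assms closed_simplex_support in auto)

lemma push_closed_simplex:
  assumes "finite \<sigma>" "\<alpha> \<in> closed_simplex \<sigma>"
  shows "push f \<alpha> \<in> closed_simplex (f ` \<sigma>)"
  unfolding closed_simplex_def
proof (intro CollectI conjI allI impI)
  fix w
  show "0 \<le> push f \<alpha> w"
    unfolding push_closed_simplex_eq[OF assms] by (intro sum_nonneg closed_simplex_nonneg[OF assms(2)])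
  show "push f \<alpha> w = 0" if "w \<notin> f ` \<sigma>"
  proof -
    have "{v \<in> \<sigma>. f v = w} = {}" using that by auto
    then show ?thesis using push_closed_simplex_eq[OF assms, of f w] by (metis sum.empty)
  qed
next
  have "sum (push f \<alpha>) (f ` \<sigma>) = sum (\<lambda>w. sum \<alpha> {v \<in> \<sigma>. f v = w}) (f ` \<sigma>)"
    by (intro sum.cong refl push_closed_simplex_eq[OF assms])
  also have "\<dots> = sum \<alpha> \<sigma>" by (rule sum.group) (use assms in auto)
  finally show "sum (push f \<alpha>) (f ` \<sigma>) = 1" using closed_simplex_sum[OF assms(2)] by simp
qed

lemma pimage_mem: "(a, b) \<in> E \<Longrightarrow> (f a, f b) \<in> pimage f E"
  unfolding pimage_def by force

lemma pimage_sym: "sym E \<Longrightarrow> (y, y') \<in> pimage f E \<Longrightarrow> (y', y) \<in> pimage f E"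
  unfolding pimage_def sym_def by fastforce

lemma image_rips_simplex: "\<sigma> \<in> rips_simplices E \<Longrightarrow> f ` \<sigma> \<in> rips_simplices (pimage f E)"
  unfolding rips_simplices_def by (auto intro: pimage_mem)

text \<open>The induced map is a map R(X,E) \<rightarrow> R(Y,f(E)), continuous since it is linear on
  every closed simplex.\<close>
lemma push_in_rips: "\<alpha> \<in> topspace (rips E) \<Longrightarrow> push f \<alpha> \<in> topspace (rips (pimage f E))"
  unfolding topspace_rips in_realization_carrier
  by (metis image_rips_simplex push_closed_simplex rips_simplex_finite)

lemma push_continuous: "continuous_map (rips E) (rips (pimage f E)) (push f)"
  unfolding continuous_map
proof (intro conjI allI impI)
  show "push f ` topspace (rips E) \<subseteq> topspace (rips (pimage f E))"
    by (rule image_subsetI) (rule push_in_rips)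
  fix V assume V: "openin (rips (pimage f E)) V"
  show "openin (rips E) {\<alpha> \<in> topspace (rips E). push f \<alpha> \<in> V}"
    unfolding openin_rips
  proof (intro conjI ballI)
    fix \<sigma> assume \<sigma>: "\<sigma> \<in> rips_simplices E"
    let ?S = "subtopology (powertop_real UNIV) (closed_simplex \<sigma>)"
    have fin: "finite \<sigma>" using rips_simplex_finite[OF \<sigma>] .
    have "openin (subtopology (powertop_real UNIV) (closed_simplex (f ` \<sigma>))) (V \<inter> closed_simplex (f ` \<sigma>))"
      using V image_rips_simplex[OF \<sigma>] unfolding openin_rips by blast
    then obtain W where W: "openin (powertop_real UNIV) W"
        "V \<inter> closed_simplex (f ` \<sigma>) = W \<inter> closed_simplex (f ` \<sigma>)"
      unfolding openin_subtopology by blast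
    have "continuous_map ?S euclideanreal (\<lambda>\<alpha>. push f \<alpha> w)" for w
    proof (rule continuous_map_eq)
      show "continuous_map ?S euclideanreal (\<lambda>\<alpha>. sum \<alpha> {v \<in> \<sigma>. f v = w})"
        using fin by (intro continuous_map_sum continuous_map_from_subtopology
            continuous_map_product_projection) auto
    qed (simp add: push_closed_simplex_eq[OF fin])
    then have "continuous_map ?S (powertop_real UNIV) (push f)"
      unfolding continuous_map_componentwise_UNIV by blast
    then have "openin ?S {\<alpha> \<in> topspace ?S. push f \<alpha> \<in> W}"
      using W(1) by (rule openin_continuous_map_preimage)
    moreover have "{\<alpha> \<in> topspace ?S. push f \<alpha> \<in> W} = {\<alpha> \<in> topspace (rips E). push f \<alpha> \<in> V} \<inter> closed_simplex \<sigma>"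
      using \<sigma> W(2) push_closed_simplex[OF fin] by (auto simp: topspace_rips in_realization_carrier)
    ultimately show "openin ?S ({\<alpha> \<in> topspace (rips E). push f \<alpha> \<in> V} \<inter> closed_simplex \<sigma>)" by simp
  qed (auto simp: topspace_rips)
qed

lemma push_edge_point:
  assumes "0 \<le> t" "t \<le> 1"
  shows "push f (edge_point x a t) = edge_point (f x) (f a) t"
proof
  fix w
  have "push f (edge_point x a t) w = sum (edge_point x a t) {v \<in> {x, a}. f v = w}"
    by (rule push_closed_simplex_eq) (use edge_point_closed_simplex[OF assms] in auto)
  also have "\<dots> = edge_point (f x) (f a) t w"
  proof (cases "x = a")
    case True
    then have "{v \<in> {x, a}. f v = w} = (if f x = w then {x} else {})" by auto
    then show ?thesis using True by (simp add: edge_point_def)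
  next
    case False
    have "sum (edge_point x a t) {v \<in> {x, a}. f v = w}
        = (\<Sum>v\<in>{x, a}. if f v = w then edge_point x a t v else 0)"
      by (rule sum.inter_filter) simp
    then show ?thesis using False by (simp add: edge_point_def)
  qed
  finally show "push f (edge_point x a t) w = edge_point (f x) (f a) t w" .
qed

section \<open>Local properties of vertex maps\<close>

definition ball_injective :: "('a \<Rightarrow> 'b) \<Rightarrow> ('a \<times> 'a) set \<Rightarrow> bool" where
  "ball_injective f E \<longleftrightarrow> (\<forall>x a b. (x, a) \<in> E \<longrightarrow> (x, b) \<in> E \<longrightarrow> f a = f b \<longrightarrow> a = b)"

definition edge_lifting :: "('a \<Rightarrow> 'b) \<Rightarrow> ('a \<times> 'a) set \<Rightarrow> bool" where
  "edge_lifting f E \<longleftrightarrow> (\<forall>x y. (f x, y) \<in> pimage f E \<longrightarrow> (\<exists>x'. (x, x') \<in> E \<and> f x' = y))"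

definition simplex_lifting :: "('a \<Rightarrow> 'b) \<Rightarrow> ('a \<times> 'a) set \<Rightarrow> bool" where
  "simplex_lifting f E \<longleftrightarrow> (\<forall>\<tau> x. \<tau> \<in> rips_simplices (pimage f E) \<longrightarrow> f x \<in> \<tau> \<longrightarrow>
     (\<exists>\<tau>'\<in>rips_simplices E. x \<in> \<tau>' \<and> f ` \<tau>' = \<tau> \<and> inj_on f \<tau>'))"

lemma ball_injectiveD: "ball_injective f E \<Longrightarrow> (x, a) \<in> E \<Longrightarrow> (x, b) \<in> E \<Longrightarrow> f a = f b \<Longrightarrow> a = b"
  unfolding ball_injective_def by blast

lemma ball_injective_mono: "ball_injective f F \<Longrightarrow> E \<subseteq> F \<Longrightarrow> ball_injective f E"
  unfolding ball_injective_def by blast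

lemma simplex_liftingE:
  assumes "simplex_lifting f E" "\<tau> \<in> rips_simplices (pimage f E)" "f x \<in> \<tau>"
  obtains \<tau>' where "\<tau>' \<in> rips_simplices E" "x \<in> \<tau>'" "f ` \<tau>' = \<tau>" "inj_on f \<tau>'"
  using assms unfolding simplex_lifting_def by blast

section \<open>Local consequences of being a covering map\<close>

lemma covering_map_sheet:
  assumes cov: "covering_map C B p" and x: "x \<in> topspace C"
  obtains u where "openin C u" "x \<in> u" "inj_on p u"
    "\<And>U. openin C U \<Longrightarrow> U \<subseteq> u \<Longrightarrow> openin B (p ` U)"
proof -
  have px: "p x \<in> topspace B"
    using cov x unfolding covering_map_def by blast
  note evenly_covered = conjunct2[OF conjunct2[OF cov[unfolded covering_map_def]]]
  from evenly_covered[rule_format, OF px] obtain T V where TV: "p x \<in> T" "openin B T" "\<Union>V = {x \<in> topspace C. p x \<in> T}"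
      "\<forall>u\<in>V. openin C u" "\<forall>u\<in>V. homeomorphic_map (subtopology C u) (subtopology B T) p"
    by (elim exE conjE) (rule that; assumption)
  then obtain u where u: "u \<in> V" "x \<in> u" using x by blast
  have ou: "openin C u" and hm: "homeomorphic_map (subtopology C u) (subtopology B T) p"
    using TV u by auto
  have tu: "topspace (subtopology C u) = u" using openin_subset[OF ou] by auto
  show ?thesis
  proof (rule that[OF ou u(2)])
    show "inj_on p u" using homeomorphic_imp_injective_map[OF hm] tu by simp
    fix U assume "openin C U" "U \<subseteq> u"
    then have "openin (subtopology C u) U"
      unfolding openin_subtopology by (intro exI[of _ U] conjI) auto
    then have "openin (subtopology B T) (p ` U)"
      using homeomorphic_imp_open_map[OF hm] unfolding open_map_def by blast
    then show "openin B (p ` U)" using openin_trans_full TV(2) by blast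
  qed
qed

text \<open>Two edges at x with the same image start in a common sheet and have equal
  images there, so they coincide.\<close>
lemma covering_ball_injective:
  assumes cov: "covering_map (rips E) (rips (pimage f E)) (push f)"
    and diag: "Id \<subseteq> E" and sym: "sym E"
  shows "ball_injective f E"
  unfolding ball_injective_def
proof (intro allI impI)
  fix x a b assume xa: "(x, a) \<in> E" and xb: "(x, b) \<in> E" and fab: "f a = f b"
  have xx: "(x, x) \<in> E" using diag by auto
  have edge: "{x, c} \<times> {x, c} \<subseteq> E" if "(x, c) \<in> E" for c
    using that diag sym unfolding sym_def by auto
  obtain u where u: "openin (rips E) u" "edge_point x a 0 \<in> u" "inj_on (push f) u"
    using covering_map_sheet[OF cov edge_point_in_rips[OF xx]] by blast
  obtain e1 where e1: "e1 > 0" "\<forall>t. 0 < t \<longrightarrow> t < e1 \<longrightarrow> edge_point x a t \<in> u"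
    using open_contains_initial_edge[OF u(1) edge[OF xa] u(2)] by blast
  obtain e2 where e2: "e2 > 0" "\<forall>t. 0 < t \<longrightarrow> t < e2 \<longrightarrow> edge_point x b t \<in> u"
    using open_contains_initial_edge[OF u(1) edge[OF xb]] u(2) edge_point_start[of x a b] by auto
  define t where "t = min (min e1 e2) 1 / 2"
  have t: "0 < t" "t < e1" "t < e2" "t \<le> 1" using e1 e2 unfolding t_def by auto
  have "push f (edge_point x a t) = push f (edge_point x b t)"
    using push_edge_point[of t f] t fab by simp
  then have "edge_point x a t = edge_point x b t" using u(3) e1 e2 t unfolding inj_on_def by blast
  then have "edge_point x a t a = edge_point x b t a" by simp
  then show "a = b" using t unfolding edge_point_def by (auto split: if_splits)
qed

lemma open_star_image_weight:
  assumes \<alpha>: "\<alpha> \<in> open_star E x" and pos: "0 < push f \<alpha> y"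
  obtains x' where "(x, x') \<in> E" "f x' = y"
proof -
  obtain \<sigma> where \<sigma>: "\<sigma> \<in> rips_simplices E" "\<alpha> \<in> closed_simplex \<sigma>" "x \<in> \<sigma>"
    using \<alpha> by (rule open_star_simplex)
  have "0 < sum \<alpha> {v \<in> \<sigma>. f v = y}"
    using pos push_closed_simplex_eq[OF rips_simplex_finite[OF \<sigma>(1)] \<sigma>(2), of f y] by simp
  then have "{v \<in> \<sigma>. f v = y} \<noteq> {}" by (metis less_irrefl sum.empty)
  then obtain v where "v \<in> \<sigma>" "f v = y" by blast
  then show thesis using that rips_edge[OF \<sigma>(1) \<sigma>(3)] by blast
qed

text \<open>The image of the star of x under the sheet through x is open, so it contains an
  initial segment of each edge at f x; a point there lifts the far end of the edge.\<close>
lemma covering_edge_lifting: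
  assumes cov: "covering_map (rips E) (rips (pimage f E)) (push f)"
    and diag: "Id \<subseteq> E" and sym: "sym E"
  shows "edge_lifting f E"
  unfolding edge_lifting_def
proof (intro allI impI)
  fix x y assume xy: "(f x, y) \<in> pimage f E"
  have xx: "(x, x) \<in> E" using diag by auto
  show "\<exists>x'. (x, x') \<in> E \<and> f x' = y"
  proof (cases "y = f x")
    case True then show ?thesis using xx by blast
  next
    case False
    obtain u where u: "openin (rips E) u" "edge_point x x 0 \<in> u"
        "\<And>U. openin (rips E) U \<Longrightarrow> U \<subseteq> u \<Longrightarrow> openin (rips (pimage f E)) (push f ` U)"
      using covering_map_sheet[OF cov edge_point_in_rips[OF xx, of x]] by metis
    define U where "U = u \<inter> open_star E x"
    have "openin (rips (pimage f E)) (push f ` U)"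
      unfolding U_def by (intro u(3) openin_Int u(1) openin_open_star) auto
    have "edge_point x x 0 \<in> U"
      using u(2) edge_point_in_rips[OF xx, of x]
      by (auto simp: U_def open_star_def topspace_rips edge_point_def)
    moreover have "push f (edge_point x x 0) = edge_point (f x) y 0"
      using push_edge_point[of 0 f x x] edge_point_start[of "f x" "f x" y] by simp
    ultimately have "edge_point (f x) y 0 \<in> push f ` U" by (metis image_eqI)
    moreover have "{f x, y} \<times> {f x, y} \<subseteq> pimage f E"
    proof -
      from xy obtain a b where "(a, b) \<in> E" "y = f b" unfolding pimage_def by auto
      then have "(y, y) \<in> pimage f E" using diag pimage_mem[of b b E f] by auto
      moreover have "(f x, f x) \<in> pimage f E" using xx by (rule pimage_mem)
      ultimately show ?thesis using xy pimage_sym[OF sym xy] by auto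
    qed
    ultimately obtain e where e: "e > 0" "\<forall>t. 0 < t \<longrightarrow> t < e \<longrightarrow> edge_point (f x) y t \<in> push f ` U"
      using open_contains_initial_edge[OF \<open>openin (rips (pimage f E)) (push f ` U)\<close>] by blast
    define t where "t = min e 1 / 2"
    have t: "0 < t" "t < e" using e unfolding t_def by auto
    then have "edge_point (f x) y t \<in> push f ` U" using e by blast
    then obtain \<alpha> where \<alpha>: "\<alpha> \<in> open_star E x" "push f \<alpha> = edge_point (f x) y t"
      unfolding U_def by auto
    have "0 < push f \<alpha> y" using \<alpha>(2) False t(1) by (simp add: edge_point_def)
    with \<alpha>(1) obtain x' where "(x, x') \<in> E" "f x' = y" by (rule open_star_image_weight)
    then show ?thesis by blast
  qed
qed

section \<open>From one-step properties to chains\<close>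

lemma is_chain_mono: "is_chain E c n \<Longrightarrow> E \<subseteq> F \<Longrightarrow> is_chain F c n"
  unfolding is_chain_def by blast

lemma edge_lifting_lifts_chains:
  assumes lift: "edge_lifting f E"
    and d: "is_chain (pimage f E) d n" "d 0 = f x0"
  shows "\<exists>c. is_chain E c n \<and> c 0 = x0 \<and> (\<forall>i\<le>n. f (c i) = d i)"
  using d(1)
proof (induction n)
  case 0
  show ?case using d(2) by (intro exI[of _ "\<lambda>_. x0"]) (auto simp: is_chain_def)
next
  case (Suc n)
  then obtain c where c: "is_chain E c n" "c 0 = x0" "\<forall>i\<le>n. f (c i) = d i"
    unfolding is_chain_def by auto
  have "(f (c n), d (Suc n)) \<in> pimage f E"
    using Suc.prems c(3) unfolding is_chain_def by auto
  then obtain x' where x': "(c n, x') \<in> E" "f x' = d (Suc n)"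
    using lift unfolding edge_lifting_def by blast
  have "is_chain E (c(Suc n := x')) (Suc n)"
    using c(1) x'(1) unfolding is_chain_def by (auto simp: less_Suc_eq)
  moreover have "\<forall>i\<le>Suc n. f ((c(Suc n := x')) i) = d i"
    using c(3) x'(2) by (auto simp: le_Suc_eq)
  moreover have "(c(Suc n := x')) 0 = x0" using c(2) by simp
  ultimately show ?case by blast
qed

lemma ball_injective_unique_chains:
  assumes inj: "ball_injective f E"
    and c: "is_chain E c n" and d: "is_chain E d n" and start: "c 0 = d 0"
    and img: "\<forall>i\<le>n. f (c i) = f (d i)"
  shows "\<forall>i\<le>n. c i = d i"
proof (intro allI impI)
  fix i assume "i \<le> n"
  then show "c i = d i"
  proof (induction i)
    case 0 show ?case using start .
  next
    case (Suc i)
    then have "c i = d i" by simp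
    moreover have "(c i, c (Suc i)) \<in> E" "(d i, d (Suc i)) \<in> E"
      using c d Suc.prems unfolding is_chain_def by auto
    moreover have "f (c (Suc i)) = f (d (Suc i))" using img Suc.prems by blast
    ultimately show ?case using ball_injectiveD[OF inj, of "c i" "c (Suc i)" "d (Suc i)"] by simp
  qed
qed

lemma entourage_UNIV: "entourage (UNIV :: ('a::uniform_space \<times> 'a) set)"
  unfolding entourage_def sym_def by auto

lemma entourage_Id: "entourage E \<Longrightarrow> Id \<subseteq> E"
  unfolding entourage_def by auto

lemma entourage_sym: "entourage E \<Longrightarrow> sym E"
  unfolding entourage_def by auto

lemma entourage_Int: "entourage A \<Longrightarrow> entourage B \<Longrightarrow> entourage (A \<inter> B)"
  unfolding entourage_def sym_def by (auto intro: eventually_conj)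

lemma entourage_mono: "entourage A \<Longrightarrow> A \<subseteq> B \<Longrightarrow> sym B \<Longrightarrow> entourage B"
  unfolding entourage_def by (auto elim: eventually_mono)

lemma entourage_half:
  assumes "entourage (H :: ('a::uniform_space \<times> 'a) set)"
  obtains G where "entourage G" "\<forall>x y z. (x, y) \<in> G \<longrightarrow> (y, z) \<in> G \<longrightarrow> (x, z) \<in> H"
proof -
  have "eventually (\<lambda>p. p \<in> H) uniformity" using assms unfolding entourage_def by blast
  then obtain D where D: "eventually D uniformity" "\<And>x y z. D (x, y) \<Longrightarrow> D (y, z) \<Longrightarrow> (x, z) \<in> H"
    by (rule uniformity_transE) blast
  define G where "G = {(x, y). D (x, y) \<and> D (y, x)}"
  have "eventually (\<lambda>p. p \<in> G) uniformity"
    using eventually_conj[OF D(1) uniformity_sym[OF D(1)]] by (simp add: G_def case_prod_unfold)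
  moreover have "sym G" "Id \<subseteq> G"
    unfolding G_def sym_def using uniformity_refl[OF D(1)] by auto
  ultimately have "entourage G" unfolding entourage_def by blast
  moreover have "(x, z) \<in> H" if "(x, y) \<in> G" "(y, z) \<in> G" for x y z
    using that D(2) unfolding G_def by blast
  ultimately show thesis using that by blast
qed

text \<open>Forward direction of the theorem: below every entourage there is one on which f is
  injective on balls and lifts edges, and these give chain lifting and unique lifts.\<close>
lemma uniform_covering_map_chain_properties:
  fixes f :: "'a::uniform_space \<Rightarrow> 'b::uniform_space"
  assumes "uniform_covering_map f"
  shows "chain_lifting f \<and> unique_chain_lifts f"
proof
  have good: "\<exists>E. entourage E \<and> E \<subseteq> D \<and> ball_injective f E \<and> edge_lifting f E"
    if D: "entourage D" for D
  proof -
    obtain E where E: "entourage E" "E \<subseteq> D" "covering_map (rips E) (rips (pimage f E)) (push f)"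
      using assms D unfolding uniform_covering_map_def by blast
    then show ?thesis
      using covering_ball_injective covering_edge_lifting entourage_Id entourage_sym by blast
  qed
  show "chain_lifting f"
    unfolding chain_lifting_def
  proof (intro allI impI)
    fix D :: "('a \<times> 'a) set" assume "entourage D"
    then obtain E where E: "entourage E" "E \<subseteq> D" "edge_lifting f E" using good by blast
    have "\<exists>c. is_chain D c n \<and> c 0 = x0 \<and> (\<forall>i\<le>n. f (c i) = d i)"
      if "is_chain (pimage f E) d n" "d 0 = f x0" for x0 and d :: "nat \<Rightarrow> 'b" and n
      using edge_lifting_lifts_chains[OF E(3) that] is_chain_mono E(2) by blast
    then show "\<exists>F. entourage F \<and> (\<forall>x0 (d :: nat \<Rightarrow> 'b) n. is_chain (pimage f F) d n \<and> d 0 = f x0 \<longrightarrow>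
        (\<exists>c. is_chain D c n \<and> c 0 = x0 \<and> (\<forall>i\<le>n. f (c i) = d i)))"
      using E(1) by blast
  qed
  show "unique_chain_lifts f"
    unfolding unique_chain_lifts_def
  proof (intro allI impI)
    obtain E where E: "entourage E" "ball_injective f E" using good[OF entourage_UNIV] by blast
    then show "\<exists>F. entourage F \<and> (\<forall>c d n. is_chain F c n \<and> is_chain F d n \<and> c 0 = d 0 \<and>
        (\<forall>i\<le>n. f (c i) = f (d i)) \<longrightarrow> (\<forall>i\<le>n. c i = d i))"
      using ball_injective_unique_chains by blast
  qed
qed


section \<open>A combinatorial criterion for covering maps of Rips complexes\<close>

text \<open>A point of a simplex of R(Y,f(E)) transported back along a bijective lift of the simplex.\<close>
definition lift_point :: "('a \<Rightarrow> 'b) \<Rightarrow> 'a set \<Rightarrow> ('b \<Rightarrow> real) \<Rightarrow> 'a \<Rightarrow> real" where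
  "lift_point f \<tau>' \<beta> = (\<lambda>v. if v \<in> \<tau>' then \<beta> (f v) else 0)"

lemma lift_point:
  assumes \<tau>': "finite \<tau>'" "f ` \<tau>' = \<tau>" "inj_on f \<tau>'" and \<beta>: "\<beta> \<in> closed_simplex \<tau>"
  shows "lift_point f \<tau>' \<beta> \<in> closed_simplex \<tau>'" "push f (lift_point f \<tau>' \<beta>) = \<beta>"
proof -
  show lifted: "lift_point f \<tau>' \<beta> \<in> closed_simplex \<tau>'"
    unfolding closed_simplex_def
  proof (intro CollectI conjI allI impI)
    fix v show "0 \<le> lift_point f \<tau>' \<beta> v" unfolding lift_point_def using closed_simplex_nonneg[OF \<beta>] by simp
    show "lift_point f \<tau>' \<beta> v = 0" if "v \<notin> \<tau>'" using that unfolding lift_point_def by simp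
  next
    have "sum (lift_point f \<tau>' \<beta>) \<tau>' = sum (\<beta> \<circ> f) \<tau>'" unfolding lift_point_def by (intro sum.cong) auto
    also have "\<dots> = sum \<beta> \<tau>" using sum.reindex[OF \<tau>'(3), of \<beta>] \<tau>'(2) by simp
    finally show "sum (lift_point f \<tau>' \<beta>) \<tau>' = 1" using closed_simplex_sum[OF \<beta>] by simp
  qed
  show "push f (lift_point f \<tau>' \<beta>) = \<beta>"
  proof
    fix w
    have eq: "push f (lift_point f \<tau>' \<beta>) w = sum (lift_point f \<tau>' \<beta>) {v \<in> \<tau>'. f v = w}"
      using push_closed_simplex_eq[OF \<tau>'(1) lifted] .
    show "push f (lift_point f \<tau>' \<beta>) w = \<beta> w"
    proof (cases "w \<in> \<tau>")
      case True
      then obtain v where v: "v \<in> \<tau>'" "f v = w" using \<tau>'(2) by blast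
      then have "{u \<in> \<tau>'. f u = w} = {v}" using \<tau>'(3) unfolding inj_on_def by blast
      then show ?thesis using eq v unfolding lift_point_def by simp
    next
      case False
      then have "{v \<in> \<tau>'. f v = w} = {}" using \<tau>'(2) by blast
      moreover have "\<beta> w = 0" using closed_simplex_support[OF \<beta>] False by blast
      ultimately show ?thesis using eq by (metis sum.empty)
    qed
  qed
qed

lemma lift_point_continuous:
  "continuous_map (subtopology (powertop_real UNIV) S) (powertop_real UNIV) (lift_point f \<tau>')"
  unfolding continuous_map_componentwise_UNIV
proof
  fix v
  have "continuous_map (subtopology (powertop_real UNIV) S) euclideanreal (\<lambda>\<beta>. \<beta> (f v))"
    by (intro continuous_map_from_subtopology continuous_map_product_projection) simp
  then show "continuous_map (subtopology (powertop_real UNIV) S) euclideanreal (\<lambda>\<beta>. lift_point f \<tau>' \<beta> v)"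
    unfolding lift_point_def by (cases "v \<in> \<tau>'") simp_all
qed

lemma rips_image_vertex:
  assumes "\<tau> \<in> rips_simplices (pimage f E)" "y \<in> \<tau>"
  obtains x where "y = f x"
proof -
  have "(y, y) \<in> pimage f E" using rips_edge[OF assms assms(2)] .
  then show thesis using that unfolding pimage_def by auto
qed

lemma rips_image_star:
  assumes "\<beta> \<in> topspace (rips (pimage f E))"
  obtains x where "\<beta> \<in> open_star (pimage f E) (f x)"
proof -
  obtain \<tau> where \<tau>: "\<tau> \<in> rips_simplices (pimage f E)" "\<beta> \<in> closed_simplex \<tau>"
    using assms unfolding topspace_rips in_realization_carrier by blast
  obtain y where y: "y \<in> \<tau>" "0 < \<beta> y" using \<tau>(2) by (rule closed_simplex_positive_vertex)
  obtain x where "y = f x" using \<tau>(1) y(1) by (rule rips_image_vertex)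
  then show thesis using that \<tau> y unfolding open_star_def in_realization_carrier by blast
qed

context
  fixes E :: "('a \<times> 'a) set" and f :: "'a \<Rightarrow> 'b"
  assumes diag: "Id \<subseteq> E" and inj: "ball_injective f E" and lift: "simplex_lifting f E"
begin

text \<open>On a simplex through x the induced map does not merge coordinates of vertices
  near x, because f is injective on B(x,E).\<close>
lemma push_coordinate:
  assumes \<sigma>: "\<sigma> \<in> rips_simplices E" "\<gamma> \<in> closed_simplex \<sigma>" "x \<in> \<sigma>" and xv: "(x, v) \<in> E"
  shows "push f \<gamma> (f v) = \<gamma> v"
proof -
  have fin: "finite \<sigma>" using rips_simplex_finite[OF \<sigma>(1)] .
  have sub: "{u \<in> \<sigma>. f u = f v} \<subseteq> {v}"
    using ball_injectiveD[OF inj _ xv] rips_edge[OF \<sigma>(1) \<sigma>(3)] by blast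
  show ?thesis
  proof (cases "v \<in> \<sigma>")
    case True
    then have "{u \<in> \<sigma>. f u = f v} = {v}" using sub by auto
    then show ?thesis using push_closed_simplex_eq[OF fin \<sigma>(2), of f "f v"] by simp
  next
    case False
    then have "{u \<in> \<sigma>. f u = f v} = {}" using sub by auto
    moreover have "\<gamma> v = 0" using closed_simplex_support[OF \<sigma>(2)] False by blast
    ultimately show ?thesis using push_closed_simplex_eq[OF fin \<sigma>(2), of f "f v"] by (metis sum.empty)
  qed
qed

lemma push_open_star:
  assumes "\<alpha> \<in> open_star E x"
  shows "push f \<alpha> \<in> open_star (pimage f E) (f x)" "push f \<alpha> (f x) = \<alpha> x"
proof -
  obtain \<sigma> where \<sigma>: "\<sigma> \<in> rips_simplices E" "\<alpha> \<in> closed_simplex \<sigma>" "x \<in> \<sigma>"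
    using assms by (rule open_star_simplex)
  show eq: "push f \<alpha> (f x) = \<alpha> x" using push_coordinate[OF \<sigma>] diag by auto
  have "push f \<alpha> \<in> closed_simplex (f ` \<sigma>)"
    using push_closed_simplex[OF rips_simplex_finite[OF \<sigma>(1)] \<sigma>(2)] .
  then show "push f \<alpha> \<in> open_star (pimage f E) (f x)"
    using eq assms image_rips_simplex[OF \<sigma>(1)]
    unfolding open_star_def in_realization_carrier by auto
qed

text \<open>Two points of the open star of x with the same image agree at every vertex of their
  supports, which all lie in B(x,E).\<close>
lemma inj_on_open_star: "inj_on (push f) (open_star E x)"
proof (rule inj_onI, rule ext)
  fix \<alpha> \<beta> v assume \<alpha>: "\<alpha> \<in> open_star E x" and \<beta>: "\<beta> \<in> open_star E x" and eq: "push f \<alpha> = push f \<beta>"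
  obtain \<sigma>1 where \<sigma>1: "\<sigma>1 \<in> rips_simplices E" "\<alpha> \<in> closed_simplex \<sigma>1" "x \<in> \<sigma>1"
    using \<alpha> by (rule open_star_simplex)
  obtain \<sigma>2 where \<sigma>2: "\<sigma>2 \<in> rips_simplices E" "\<beta> \<in> closed_simplex \<sigma>2" "x \<in> \<sigma>2"
    using \<beta> by (rule open_star_simplex)
  show "\<alpha> v = \<beta> v"
  proof (cases "\<alpha> v = 0 \<and> \<beta> v = 0")
    case False
    then have "v \<in> \<sigma>1 \<or> v \<in> \<sigma>2"
      using closed_simplex_support[OF \<sigma>1(2)] closed_simplex_support[OF \<sigma>2(2)] by blast
    then have "(x, v) \<in> E" using rips_edge[OF \<sigma>1(1) \<sigma>1(3)] rips_edge[OF \<sigma>2(1) \<sigma>2(3)] by blast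
    then show ?thesis using push_coordinate[OF \<sigma>1] push_coordinate[OF \<sigma>2] eq by metis
  qed simp
qed

text \<open>A point of the star of f x lies on a simplex through f x; lifting that simplex to
  one through x lifts the point into the star of x.\<close>
lemma lift_point_open_star:
  assumes \<tau>: "\<tau> \<in> rips_simplices (pimage f E)" "\<beta> \<in> closed_simplex \<tau>"
    and \<tau>': "\<tau>' \<in> rips_simplices E" "x \<in> \<tau>'" "f ` \<tau>' = \<tau>" "inj_on f \<tau>'"
    and pos: "0 < \<beta> (f x)"
  shows "lift_point f \<tau>' \<beta> \<in> open_star E x" "push f (lift_point f \<tau>' \<beta>) = \<beta>"
proof -
  note lp = lift_point[OF rips_simplex_finite[OF \<tau>'(1)] \<tau>'(3,4) \<tau>(2)]
  have "lift_point f \<tau>' \<beta> x = \<beta> (f x)" unfolding lift_point_def using \<tau>'(2) by simp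
  then show "lift_point f \<tau>' \<beta> \<in> open_star E x"
    using lp(1) \<tau>'(1) pos unfolding open_star_def in_realization_carrier by auto
  show "push f (lift_point f \<tau>' \<beta>) = \<beta>" using lp(2) .
qed

lemma push_open_star_onto: "push f ` open_star E x = open_star (pimage f E) (f x)"
proof
  show "push f ` open_star E x \<subseteq> open_star (pimage f E) (f x)" using push_open_star(1) by blast
  show "open_star (pimage f E) (f x) \<subseteq> push f ` open_star E x"
  proof
    fix \<beta> assume \<beta>: "\<beta> \<in> open_star (pimage f E) (f x)"
    then obtain \<tau> where \<tau>: "\<tau> \<in> rips_simplices (pimage f E)" "\<beta> \<in> closed_simplex \<tau>" "f x \<in> \<tau>"
      by (rule open_star_simplex)
    obtain \<tau>' where \<tau>': "\<tau>' \<in> rips_simplices E" "x \<in> \<tau>'" "f ` \<tau>' = \<tau>" "inj_on f \<tau>'"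
      using lift \<tau>(1,3) by (rule simplex_liftingE)
    have "0 < \<beta> (f x)" using \<beta> unfolding open_star_def by simp
    from lift_point_open_star[OF \<tau>(1,2) \<tau>' this] show "\<beta> \<in> push f ` open_star E x"
      by (metis image_eqI)
  qed
qed

lemma push_image_trace:
  assumes U: "U \<subseteq> open_star E x"
    and \<tau>: "\<tau> \<in> rips_simplices (pimage f E)"
    and \<tau>': "\<tau>' \<in> rips_simplices E" "x \<in> \<tau>'" "f ` \<tau>' = \<tau>" "inj_on f \<tau>'"
  shows "push f ` U \<inter> closed_simplex \<tau> = {\<beta> \<in> closed_simplex \<tau>. lift_point f \<tau>' \<beta> \<in> U}"
proof (intro set_eqI iffI)
  fix \<beta> assume "\<beta> \<in> push f ` U \<inter> closed_simplex \<tau>"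
  then obtain \<alpha> where \<alpha>: "\<alpha> \<in> U" "\<beta> = push f \<alpha>" and \<beta>: "\<beta> \<in> closed_simplex \<tau>" by blast
  have \<alpha>x: "\<alpha> \<in> open_star E x" using \<alpha>(1) U by blast
  have "0 < \<beta> (f x)" using push_open_star(2)[OF \<alpha>x] \<alpha>x \<alpha>(2) by (simp add: open_star_def)
  note lp = lift_point_open_star[OF \<tau> \<beta> \<tau>' this]
  have "push f (lift_point f \<tau>' \<beta>) = push f \<alpha>" using lp(2) \<alpha>(2) by simp
  then have "lift_point f \<tau>' \<beta> = \<alpha>" using inj_onD[OF inj_on_open_star _ lp(1) \<alpha>x] by blast
  then show "\<beta> \<in> {\<beta> \<in> closed_simplex \<tau>. lift_point f \<tau>' \<beta> \<in> U}" using \<alpha>(1) \<beta> by simp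
next
  fix \<beta> assume "\<beta> \<in> {\<beta> \<in> closed_simplex \<tau>. lift_point f \<tau>' \<beta> \<in> U}"
  then have \<beta>: "\<beta> \<in> closed_simplex \<tau>" "lift_point f \<tau>' \<beta> \<in> U" by auto
  have "push f (lift_point f \<tau>' \<beta>) = \<beta>"
    using lift_point(2)[OF rips_simplex_finite[OF \<tau>'(1)] \<tau>'(3,4) \<beta>(1)] .
  then show "\<beta> \<in> push f ` U \<inter> closed_simplex \<tau>" using \<beta> by (metis IntI image_eqI)
qed

lemma open_map_on_open_star:
  assumes U: "openin (rips E) U" "U \<subseteq> open_star E x"
  shows "openin (rips (pimage f E)) (push f ` U)"
  unfolding openin_rips
proof (intro conjI ballI)
  show "push f ` U \<subseteq> realization_carrier (rips_simplices (pimage f E))"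
    using push_open_star(1) U(2) unfolding open_star_def by blast
  fix \<tau> assume \<tau>: "\<tau> \<in> rips_simplices (pimage f E)"
  let ?S = "subtopology (powertop_real UNIV) (closed_simplex \<tau>)"
  show "openin ?S (push f ` U \<inter> closed_simplex \<tau>)"
  proof (cases "f x \<in> \<tau>")
    case False
    have "push f ` U \<inter> closed_simplex \<tau> = {}"
      using push_open_star(1) U(2) closed_simplex_support False
      unfolding open_star_def by fastforce
    then show ?thesis by simp
  next
    case True
    obtain \<tau>' where \<tau>': "\<tau>' \<in> rips_simplices E" "x \<in> \<tau>'" "f ` \<tau>' = \<tau>" "inj_on f \<tau>'"
      using lift \<tau> True by (rule simplex_liftingE)
    have "openin (subtopology (powertop_real UNIV) (closed_simplex \<tau>')) (U \<inter> closed_simplex \<tau>')"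
      using U(1) \<tau>'(1) unfolding openin_rips by blast
    then obtain W where W: "openin (powertop_real UNIV) W" "U \<inter> closed_simplex \<tau>' = W \<inter> closed_simplex \<tau>'"
      unfolding openin_subtopology by blast
    have "openin ?S {\<beta> \<in> topspace ?S. lift_point f \<tau>' \<beta> \<in> W}"
      using lift_point_continuous W(1) by (rule openin_continuous_map_preimage)
    moreover have "{\<beta> \<in> topspace ?S. lift_point f \<tau>' \<beta> \<in> W} = push f ` U \<inter> closed_simplex \<tau>"
      unfolding push_image_trace[OF U(2) \<tau> \<tau>']
      using W(2) lift_point(1)[OF rips_simplex_finite[OF \<tau>'(1)] \<tau>'(3,4)] by auto
    ultimately show ?thesis by simp
  qed
qed

lemma homeomorphic_open_star:
  "homeomorphic_map (subtopology (rips E) (open_star E x))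
     (subtopology (rips (pimage f E)) (open_star (pimage f E) (f x))) (push f)"
proof (rule bijective_open_imp_homeomorphic_map)
  have top: "topspace (subtopology (rips E) (open_star E x)) = open_star E x"
    "topspace (subtopology (rips (pimage f E)) (open_star (pimage f E) (f x))) = open_star (pimage f E) (f x)"
    by (auto simp: topspace_rips open_star_def)
  show "continuous_map (subtopology (rips E) (open_star E x))
      (subtopology (rips (pimage f E)) (open_star (pimage f E) (f x))) (push f)"
  proof (rule continuous_map_into_subtopology)
    show "continuous_map (subtopology (rips E) (open_star E x)) (rips (pimage f E)) (push f)"
      using push_continuous by (rule continuous_map_from_subtopology)
    show "push f \<in> topspace (subtopology (rips E) (open_star E x)) \<rightarrow> open_star (pimage f E) (f x)"
      unfolding top(1) using push_open_star(1) by blast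
  qed
  show "open_map (subtopology (rips E) (open_star E x))
      (subtopology (rips (pimage f E)) (open_star (pimage f E) (f x))) (push f)"
    unfolding open_map_def
  proof (intro allI impI)
    fix U assume U0: "openin (subtopology (rips E) (open_star E x)) U"
    have U: "openin (rips E) U" "U \<subseteq> open_star E x"
      using openin_trans_full[OF U0 openin_open_star] openin_subset[OF U0] top(1) by auto
    then have "push f ` U \<subseteq> open_star (pimage f E) (f x)" using push_open_star(1) by blast
    then show "openin (subtopology (rips (pimage f E)) (open_star (pimage f E) (f x))) (push f ` U)"
      using open_map_on_open_star[OF U] unfolding openin_subtopology by blast
  qed
  show "push f ` topspace (subtopology (rips E) (open_star E x)) =
      topspace (subtopology (rips (pimage f E)) (open_star (pimage f E) (f x)))"
    using push_open_star_onto top by simp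
  show "inj_on (push f) (topspace (subtopology (rips E) (open_star E x)))"
    using inj_on_open_star top(1) by simp
qed

text \<open>The stars of distinct points of a fibre are disjoint: a common point would put both
  in one simplex, hence in one ball.\<close>
lemma disjoint_open_stars:
  assumes "f x1 = f x2" "x1 \<noteq> x2"
  shows "open_star E x1 \<inter> open_star E x2 = {}"
proof (rule ccontr)
  assume "open_star E x1 \<inter> open_star E x2 \<noteq> {}"
  then obtain \<alpha> where \<alpha>: "\<alpha> \<in> open_star E x1" "\<alpha> \<in> open_star E x2" by blast
  obtain \<sigma> where \<sigma>: "\<sigma> \<in> rips_simplices E" "\<alpha> \<in> closed_simplex \<sigma>" "x1 \<in> \<sigma>"
    using \<alpha>(1) by (rule open_star_simplex)
  have "\<alpha> x2 \<noteq> 0" using \<alpha>(2) unfolding open_star_def by simp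
  then have "(x1, x2) \<in> E" using rips_edge[OF \<sigma>(1,3)] closed_simplex_support[OF \<sigma>(2)] by blast
  moreover have "(x1, x1) \<in> E" using diag by auto
  ultimately show False using ball_injectiveD[OF inj, of x1 x2 x1] assms by simp
qed

lemma preimage_open_star:
  "{\<alpha> \<in> topspace (rips E). push f \<alpha> \<in> open_star (pimage f E) y} = \<Union>(open_star E ` {x. f x = y})"
proof (intro set_eqI iffI)
  fix \<alpha> assume "\<alpha> \<in> {\<alpha> \<in> topspace (rips E). push f \<alpha> \<in> open_star (pimage f E) y}"
  then obtain \<sigma> where \<sigma>: "\<sigma> \<in> rips_simplices E" "\<alpha> \<in> closed_simplex \<sigma>" and pos: "0 < push f \<alpha> y"
    unfolding topspace_rips in_realization_carrier open_star_def by blast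
  have "0 < sum \<alpha> {v \<in> \<sigma>. f v = y}"
    using pos push_closed_simplex_eq[OF rips_simplex_finite[OF \<sigma>(1)] \<sigma>(2), of f y] by simp
  then obtain v where "v \<in> \<sigma>" "f v = y" "0 < \<alpha> v"
    using sum_nonpos[of "{v \<in> \<sigma>. f v = y}" \<alpha>] by (metis (mono_tags, lifting) mem_Collect_eq not_le)
  then show "\<alpha> \<in> \<Union>(open_star E ` {x. f x = y})"
    using \<sigma> unfolding open_star_def in_realization_carrier by blast
next
  fix \<alpha> assume "\<alpha> \<in> \<Union>(open_star E ` {x. f x = y})"
  then obtain x where "f x = y" "\<alpha> \<in> open_star E x" by blast
  then show "\<alpha> \<in> {\<alpha> \<in> topspace (rips E). push f \<alpha> \<in> open_star (pimage f E) y}"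
    using push_open_star(1) by (auto simp: topspace_rips open_star_def)
qed

lemma push_rips_onto: "push f ` topspace (rips E) = topspace (rips (pimage f E))"
proof
  show "push f ` topspace (rips E) \<subseteq> topspace (rips (pimage f E))"
    by (rule image_subsetI) (rule push_in_rips)
  show "topspace (rips (pimage f E)) \<subseteq> push f ` topspace (rips E)"
  proof
    fix \<beta> assume "\<beta> \<in> topspace (rips (pimage f E))"
    then obtain x where "\<beta> \<in> open_star (pimage f E) (f x)" by (rule rips_image_star)
    then have "\<beta> \<in> push f ` open_star E x" by (simp add: push_open_star_onto)
    moreover have "open_star E x \<subseteq> topspace (rips E)" by (rule openin_subset[OF openin_open_star])
    ultimately show "\<beta> \<in> push f ` topspace (rips E)" by blast
  qed
qed

text \<open>Combinatorial covering criterion: injectivity on balls and lifting of simplices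
  make the induced map of Rips complexes a covering map, evenly covering the star of
  every vertex by the stars over its fibre.\<close>
lemma covering_map_of_simplex_lifting: "covering_map (rips E) (rips (pimage f E)) (push f)"
  unfolding covering_map_def
proof (intro conjI ballI)
  show "continuous_map (rips E) (rips (pimage f E)) (push f)" by (rule push_continuous)
  show "push f ` topspace (rips E) = topspace (rips (pimage f E))" by (rule push_rips_onto)
  fix \<beta> assume "\<beta> \<in> topspace (rips (pimage f E))"
  then obtain x0 where \<beta>: "\<beta> \<in> open_star (pimage f E) (f x0)" by (rule rips_image_star)
  let ?T = "open_star (pimage f E) (f x0)"
  let ?V = "open_star E ` {x. f x = f x0}"
  show "\<exists>T. \<beta> \<in> T \<and> openin (rips (pimage f E)) T \<and>
      (\<exists>V. \<Union>V = {\<alpha> \<in> topspace (rips E). push f \<alpha> \<in> T} \<and> (\<forall>u\<in>V. openin (rips E) u) \<and>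
        pairwise disjnt V \<and> (\<forall>u\<in>V. homeomorphic_map (subtopology (rips E) u) (subtopology (rips (pimage f E)) T) (push f)))"
  proof (intro exI[of _ ?T] exI[of _ ?V] conjI ballI)
    show "\<beta> \<in> ?T" by (rule \<beta>)
    show "openin (rips (pimage f E)) ?T" by (rule openin_open_star)
    show "\<Union>?V = {\<alpha> \<in> topspace (rips E). push f \<alpha> \<in> ?T}" by (rule preimage_open_star[symmetric])
    show "pairwise disjnt ?V"
    proof (rule pairwiseI)
      fix u v assume "u \<in> ?V" "v \<in> ?V" "u \<noteq> v"
      then obtain x1 x2 where "f x1 = f x0" "f x2 = f x0" "u = open_star E x1" "v = open_star E x2"
        by blast
      then show "disjnt u v" using disjoint_open_stars[of x1 x2] \<open>u \<noteq> v\<close> unfolding disjnt_def by auto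
    qed
  next
    fix u assume "u \<in> ?V"
    then obtain x where x: "f x = f x0" "u = open_star E x" by blast
    show "openin (rips E) u" using x(2) openin_open_star by simp
    show "homeomorphic_map (subtopology (rips E) u) (subtopology (rips (pimage f E)) ?T) (push f)"
      using homeomorphic_open_star[of x] x by simp
  qed
qed

end


text \<open>Uniqueness of chain lifts, applied to chains of length one, gives an entourage on whose
  balls f is injective.\<close>
lemma unique_chain_lifts_ball_injective:
  fixes f :: "'a::uniform_space \<Rightarrow> 'b"
  assumes "unique_chain_lifts f"
  obtains F where "entourage F" "ball_injective f F"
proof -
  from assms entourage_UNIV obtain F where F: "entourage F"
    and uniq: "\<forall>c d n. is_chain F c n \<and> is_chain F d n \<and> c 0 = d 0 \<and> (\<forall>i\<le>n. f (c i) = f (d i))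
        \<longrightarrow> (\<forall>i\<le>n. c i = d i)"
    unfolding unique_chain_lifts_def by blast
  have "ball_injective f F"
    unfolding ball_injective_def
  proof (intro allI impI)
    fix x a b assume xa: "(x, a) \<in> F" and xb: "(x, b) \<in> F" and fab: "f a = f b"
    define c where "c = (\<lambda>i::nat. if i = 0 then x else a)"
    define d where "d = (\<lambda>i::nat. if i = 0 then x else b)"
    have "is_chain F c 1" "is_chain F d 1" "c 0 = d 0" "\<forall>i\<le>1. f (c i) = f (d i)"
      using xa xb fab unfolding is_chain_def c_def d_def by (auto simp: le_Suc_eq)
    then have "c 1 = d 1" using uniq by blast
    then show "a = b" unfolding c_def d_def by simp
  qed
  then show thesis using that F by blast
qed

text \<open>Chain lifting, applied to chains of length two, lifts pairs of consecutive edges.\<close>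
lemma chain_lifting_two_steps:
  fixes f :: "'a::uniform_space \<Rightarrow> 'b"
  assumes "chain_lifting f" "entourage G"
  obtains F where "entourage F"
    "\<forall>x w w'. (f x, w) \<in> pimage f F \<longrightarrow> (w, w') \<in> pimage f F \<longrightarrow>
       (\<exists>c1 c2. (x, c1) \<in> G \<and> (c1, c2) \<in> G \<and> f c1 = w \<and> f c2 = w')"
proof -
  from assms obtain F where F: "entourage F"
    and lift: "\<forall>x0 (d :: nat \<Rightarrow> 'b) n. is_chain (pimage f F) d n \<and> d 0 = f x0 \<longrightarrow>
        (\<exists>c. is_chain G c n \<and> c 0 = x0 \<and> (\<forall>i\<le>n. f (c i) = d i))"
    unfolding chain_lifting_def by blast
  have "\<exists>c1 c2. (x, c1) \<in> G \<and> (c1, c2) \<in> G \<and> f c1 = w \<and> f c2 = w'"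
    if "(f x, w) \<in> pimage f F" "(w, w') \<in> pimage f F" for x w w'
  proof -
    define d where "d = (\<lambda>i::nat. if i = 0 then f x else if i = 1 then w else w')"
    have "is_chain (pimage f F) d 2" "d 0 = f x"
      using that unfolding is_chain_def d_def by (auto simp: less_Suc_eq numeral_2_eq_2)
    then obtain c where c: "is_chain G c 2" "c 0 = x" "\<forall>i\<le>2. f (c i) = d i"
      using lift by blast
    then have "(x, c 1) \<in> G" "(c 1, c 2) \<in> G" "f (c 1) = w" "f (c 2) = w'"
      unfolding is_chain_def d_def by (auto simp: numeral_2_eq_2)
    then show ?thesis by blast
  qed
  then show thesis using that F by blast
qed

text \<open>The lift of a simplex through f x is formed by the unique preimages
  of its vertices in the ball B(x,F).\<close>
lemma two_step_lifting_simplex_lifting: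
  assumes inj: "ball_injective f F"
    and diag: "Id \<subseteq> G" and square: "\<And>x y z. (x, y) \<in> G \<Longrightarrow> (y, z) \<in> G \<Longrightarrow> (x, z) \<in> F"
    and lift2: "\<And>x w w'. (f x, w) \<in> pimage f E \<Longrightarrow> (w, w') \<in> pimage f E \<Longrightarrow>
       \<exists>c1 c2. (x, c1) \<in> G \<and> (c1, c2) \<in> G \<and> f c1 = w \<and> f c2 = w'"
    and saturated: "\<And>a b. (a, b) \<in> G \<Longrightarrow> (f a, f b) \<in> pimage f E \<Longrightarrow> (a, b) \<in> E"
  shows "simplex_lifting f E"
  unfolding simplex_lifting_def
proof (intro allI impI)
  fix \<tau> x assume \<tau>: "\<tau> \<in> rips_simplices (pimage f E)" and fx: "f x \<in> \<tau>"
  have GF: "(a, b) \<in> F" if "(a, b) \<in> G" for a b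
    using square[OF that, of b] diag by auto
  have edge: "(w, w') \<in> pimage f E" if "w \<in> \<tau>" "w' \<in> \<tau>" for w w'
    using rips_edge[OF \<tau> that] .
  have "\<exists>z. (x, z) \<in> G \<and> f z = w" if w: "w \<in> \<tau>" for w
    using lift2[OF edge[OF fx w] edge[OF w w]] by blast
  then obtain g where g: "\<And>w. w \<in> \<tau> \<Longrightarrow> (x, g w) \<in> G" "\<And>w. w \<in> \<tau> \<Longrightarrow> f (g w) = w"
    by metis
  have unique: "z = g w" if "w \<in> \<tau>" "(x, z) \<in> F" "f z = w" for w z
    using ball_injectiveD[OF inj that(2) GF[OF g(1)[OF that(1)]]] g(2)[OF that(1)] that(3) by simp
  have "(x, x) \<in> F" using GF[of x x] diag by auto
  then have gx: "g (f x) = x" using unique[OF fx] by simp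
  have pair: "(g w, g w') \<in> E" if w: "w \<in> \<tau>" "w' \<in> \<tau>" for w w'
  proof -
    obtain c1 c2 where c: "(x, c1) \<in> G" "(c1, c2) \<in> G" "f c1 = w" "f c2 = w'"
      using lift2[OF edge[OF fx w(1)] edge[OF w]] by blast
    have "c1 = g w" using unique[OF w(1) GF[OF c(1)] c(3)] .
    moreover have "c2 = g w'" using unique[OF w(2) square[OF c(1,2)] c(4)] .
    ultimately show ?thesis using saturated[OF c(2)] edge[OF w] c(3,4) by simp
  qed
  show "\<exists>\<tau>'\<in>rips_simplices E. x \<in> \<tau>' \<and> f ` \<tau>' = \<tau> \<and> inj_on f \<tau>'"
  proof (intro bexI conjI)
    show "g ` \<tau> \<in> rips_simplices E" using \<tau> pair unfolding rips_simplices_def by auto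
    show "x \<in> g ` \<tau>" using gx fx by force
    show "f ` g ` \<tau> = \<tau>" using g(2) by force
    show "inj_on f (g ` \<tau>)" using g(2) by (auto intro: inj_onI)
  qed
qed

text \<open>Below a given entourage D we cut out
  E = (D \<inter> F) \<inter> (f \<times> f)\<inverse>(f(L)), where f is injective on the balls of F, G \<circ> G \<subseteq> D \<inter> F, and
  pairs of consecutive edges of f(L) lift into G; then f(E) \<subseteq> f(L) and E is saturated.\<close>
lemma chain_properties_uniform_covering_map:
  fixes f :: "'a::uniform_space \<Rightarrow> 'b::uniform_space"
  assumes gen: "generates_uniformity f" and cl: "chain_lifting f" and ul: "unique_chain_lifts f"
  shows "uniform_covering_map f"
  unfolding uniform_covering_map_def
proof (intro conjI allI impI gen)
  fix D :: "('a \<times> 'a) set" assume D: "entourage D"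
  obtain F where F: "entourage F" "ball_injective f F"
    using ul by (rule unique_chain_lifts_ball_injective)
  have DF: "entourage (D \<inter> F)" using entourage_Int[OF D F(1)] .
  obtain G where G: "entourage G" "\<forall>x y z. (x, y) \<in> G \<longrightarrow> (y, z) \<in> G \<longrightarrow> (x, z) \<in> D \<inter> F"
    using DF by (rule entourage_half)
  obtain L where L: "entourage L"
    "\<forall>x w w'. (f x, w) \<in> pimage f L \<longrightarrow> (w, w') \<in> pimage f L \<longrightarrow>
       (\<exists>c1 c2. (x, c1) \<in> G \<and> (c1, c2) \<in> G \<and> f c1 = w \<and> f c2 = w')"
    using cl G(1) by (rule chain_lifting_two_steps)
  define E where "E = (D \<inter> F) \<inter> {(a, b). (f a, f b) \<in> pimage f L}"
  have "sym {(a, b). (f a, f b) \<in> pimage f L}"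
    by (rule symI) (simp add: pimage_sym[OF entourage_sym[OF L(1)]])
  then have "sym E" unfolding E_def by (rule sym_Int[OF entourage_sym[OF DF]])
  moreover have "D \<inter> F \<inter> L \<subseteq> E" unfolding E_def by (auto intro: pimage_mem)
  ultimately have E: "entourage E" using entourage_mono[OF entourage_Int[OF DF L(1)]] by blast
  have fE: "pimage f E \<subseteq> pimage f L" unfolding E_def pimage_def by auto
  have GDF: "(a, b) \<in> D \<inter> F" if "(a, b) \<in> G" for a b
    using G(2)[rule_format, OF that, of b] entourage_Id[OF G(1)] by auto
  have lift: "simplex_lifting f E"
  proof (rule two_step_lifting_simplex_lifting[OF F(2) entourage_Id[OF G(1)]])
    show "(x, z) \<in> F" if "(x, y) \<in> G" "(y, z) \<in> G" for x y z using G(2)[rule_format, OF that] by blast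
    show "\<exists>c1 c2. (x, c1) \<in> G \<and> (c1, c2) \<in> G \<and> f c1 = w \<and> f c2 = w'"
      if "(f x, w) \<in> pimage f E" "(w, w') \<in> pimage f E" for x w w'
      using L(2) that fE by blast
    show "(a, b) \<in> E" if "(a, b) \<in> G" "(f a, f b) \<in> pimage f E" for a b
      using GDF[OF that(1)] that(2) fE unfolding E_def by auto
  qed
  have inj: "ball_injective f E" using F(2) by (rule ball_injective_mono) (auto simp: E_def)
  have "covering_map (rips E) (rips (pimage f E)) (push f)"
    using entourage_Id[OF E] inj lift by (rule covering_map_of_simplex_lifting)
  moreover have "E \<subseteq> D" unfolding E_def by blast
  ultimately show "\<exists>E. entourage E \<and> E \<subseteq> D \<and> covering_map (rips E) (rips (pimage f E)) (push f)"
    using E by blast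
qed

theorem mainTheorem3:
  fixes f :: "'a::uniform_space \<Rightarrow> 'b::uniform_space"
  assumes "generates_uniformity f"
  shows "uniform_covering_map f \<longleftrightarrow> chain_lifting f \<and> unique_chain_lifts f"
proof
  assume "uniform_covering_map f"
  then show "chain_lifting f \<and> unique_chain_lifts f" by (rule uniform_covering_map_chain_properties)
next
  assume "chain_lifting f \<and> unique_chain_lifts f"
  then show "uniform_covering_map f" using chain_properties_uniform_covering_map[OF assms] by blast
qed

end
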